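(* Let $\mathbf K\in\mathbb R^{n\times d}$ have rows $\mathbf k_1,\dots,\mathbf k_n$, $\beta>0$, $\mathbf H=(\exp(\beta\langle\mathbf k_i,\mathbf k_l\rangle))_{i,l}$, and for $s\in\{0,1,2,\dots\}$ let $\mathbf T^s$ be the order-$s$ Taylor approximation with entries $\mathbf T^s_{il}=\sum_{|\alpha|\le s}\phi_\alpha(\mathbf k_i)\phi_\alpha(\mathbf k_l)$, where for a multi-index $\alpha\in\mathbb N_0^d$, $\phi_\alpha(\mathbf k)=\sqrt{\frac{1}{|\alpha|!}\binom{|\alpha|}{\alpha}\beta^{|\alpha|}}\,\mathbf k^\alpha$. Then $\mathrm{rank}(\mathbf T^s)\le\binom{s+d}{d}$, $\mathbf T^s\preceq\mathbf H$, and $$\|\mathbf H-\mathbf T^s\|_*\le n\exp(\beta\|\mathbf K\|_{2,\infty}^2)\left(\frac{e\beta\|\mathbf K\|_{2,\infty}^2}{s+1}\right)^{s+1}.$$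
   Context: Multi-index notation: $|\alpha|=\alpha_1+\dots+\alpha_d$, $\binom{s}{\alpha}=\frac{s!}{\alpha_1!\cdots\alpha_d!}$, $\mathbf k^\alpha=\prod_j\mathbf k_j^{\alpha_j}$. Equivalently $\mathbf T^s_{il}=\sum_{p=0}^s\frac1{p!}(\beta\langle\mathbf k_i,\mathbf k_l\rangle)^p$. $\|\mathbf K\|_{2,\infty}$ is the maximal Euclidean row norm, $\|\cdot\|_*$ the nuclear norm, $\preceq$ the Loewner order. *)

theory Defs
  imports "Jordan_Normal_Form.Jordan_Normal_Form" "Jordan_Normal_Form.DL_Rank"
begin

text \<open>Multi-indices alpha in N_0^d with |alpha| <= s, represented as functions nat => nat
  vanishing outside {..<d}.\<close>
definition multi_indices :: "nat \<Rightarrow> nat \<Rightarrow> (nat \<Rightarrow> nat) set" where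
  "multi_indices d s = {\<alpha>. (\<forall>j\<ge>d. \<alpha> j = 0) \<and> (\<Sum>j<d. \<alpha> j) \<le> s}"

definition mi_abs :: "nat \<Rightarrow> (nat \<Rightarrow> nat) \<Rightarrow> nat" where
  "mi_abs d \<alpha> = (\<Sum>j<d. \<alpha> j)"

definition multinom :: "nat \<Rightarrow> (nat \<Rightarrow> nat) \<Rightarrow> real" where
  "multinom d \<alpha> = fact (mi_abs d \<alpha>) / (\<Prod>j<d. fact (\<alpha> j))"

definition phi :: "real \<Rightarrow> nat \<Rightarrow> (nat \<Rightarrow> nat) \<Rightarrow> real vec \<Rightarrow> real" where
  "phi \<beta> d \<alpha> k = sqrt (1 / fact (mi_abs d \<alpha>) * multinom d \<alpha> * \<beta> ^ mi_abs d \<alpha>)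
                   * (\<Prod>j<d. (k $ j) ^ \<alpha> j)"

definition exp_kernel :: "real \<Rightarrow> real mat \<Rightarrow> real mat" where
  "exp_kernel \<beta> K = mat (dim_row K) (dim_row K) (\<lambda>(i,l). exp (\<beta> * (row K i \<bullet> row K l)))"

definition taylor_kernel :: "real \<Rightarrow> nat \<Rightarrow> real mat \<Rightarrow> real mat" where
  "taylor_kernel \<beta> s K = mat (dim_row K) (dim_row K)
     (\<lambda>(i,l). \<Sum>\<alpha>\<in>multi_indices (dim_col K) s.
                 phi \<beta> (dim_col K) \<alpha> (row K i) * phi \<beta> (dim_col K) \<alpha> (row K l))"

definition norm_2_inf :: "real mat \<Rightarrow> real" where
  "norm_2_inf K = Max (insert 0 ((\<lambda>i. sqrt (\<Sum>j<dim_col K. (K $$ (i,j))^2)) ` {..<dim_row K}))"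

definition loewner_le :: "real mat \<Rightarrow> real mat \<Rightarrow> bool" where
  "loewner_le A B \<longleftrightarrow> (\<exists>n. A \<in> carrier_mat n n \<and> B \<in> carrier_mat n n \<and>
      (\<forall>x\<in>carrier_vec n. 0 \<le> x \<bullet> (mult_mat_vec (B - A) x)))"

text \<open>nuclear norm: sum of the singular values, i.e. of the square roots of the eigenvalues
  of A^T A, counted with (algebraic) multiplicity\<close>
definition nuclear_norm :: "real mat \<Rightarrow> real" where
  "nuclear_norm A = (let M = transpose_mat A * A in
     \<Sum>a\<in>{a. eigenvalue M a}. real (Polynomial.order a (char_poly M)) * sqrt a)"

definition mat_rank :: "real mat \<Rightarrow> nat" where
  "mat_rank A = vec_space.rank (dim_row A) A"

end

theory Submission
  imports Defs "Jordan_Normal_Form.Schur_Decomposition"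
begin

text \<open>Each multi-index alpha contributes the rank-one matrix (phi_alpha(k_i) phi_alpha(k_l))_il,
  and there are (s+d choose d) multi-indices with |alpha| <= s. By the multinomial theorem
  T^s_il is the exponential series of beta <k_i, k_l> truncated after degree s, so
  H - T^s is the sum over p > s of beta^p / p! times the p-th Hadamard power of the Gram matrix
  of the rows, which is positive semidefinite by Schur's product theorem. For a symmetric
  positive semidefinite matrix the nuclear norm is the trace, and each diagonal entry is a
  Taylor remainder of exp at beta |k_i|^2 <= beta ||K||_{2,inf}^2; its Lagrange form together with
  m^m / m! <= e^m gives the bound.\<close>

section \<open>Multi-indices and the truncated multinomial expansion\<close>

lemma multi_indices_0: "multi_indices 0 s = {\<lambda>_. 0}"
  unfolding multi_indices_def by auto

lemma multi_indices_Suc: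
  "multi_indices (Suc d) s = (\<lambda>(a, \<alpha>). \<alpha>(d := a)) ` (SIGMA a:{..s}. multi_indices d (s - a))"
proof (intro equalityI subsetI)
  fix \<gamma> assume \<gamma>: "\<gamma> \<in> multi_indices (Suc d) s"
  have sum_eq: "(\<Sum>j<d. (\<gamma>(d := 0)) j) = (\<Sum>j<d. \<gamma> j)" by (intro sum.cong) auto
  from \<gamma> have le: "(\<Sum>j<d. \<gamma> j) + \<gamma> d \<le> s" unfolding multi_indices_def by auto
  with \<gamma> sum_eq have "(\<gamma> d, \<gamma>(d := 0)) \<in> (SIGMA a:{..s}. multi_indices d (s - a))"
    unfolding multi_indices_def by auto
  moreover have "\<gamma> = (\<gamma>(d := 0))(d := \<gamma> d)" by simp
  ultimately show "\<gamma> \<in> (\<lambda>(a, \<alpha>). \<alpha>(d := a)) ` (SIGMA a:{..s}. multi_indices d (s - a))"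
    by (intro image_eqI[where x="(\<gamma> d, \<gamma>(d := 0))"]) auto
next
  fix \<gamma> assume "\<gamma> \<in> (\<lambda>(a, \<alpha>). \<alpha>(d := a)) ` (SIGMA a:{..s}. multi_indices d (s - a))"
  then obtain a \<alpha> where "a \<le> s" "\<alpha> \<in> multi_indices d (s - a)" "\<gamma> = \<alpha>(d := a)" by auto
  moreover have "(\<Sum>j<d. (\<alpha>(d := a)) j) = (\<Sum>j<d. \<alpha> j)" by (intro sum.cong) auto
  ultimately show "\<gamma> \<in> multi_indices (Suc d) s" unfolding multi_indices_def by auto
qed

lemma inj_on_multi_indices_Suc:
  "inj_on (\<lambda>(a, \<alpha>). \<alpha>(d := a)) (SIGMA a:{..s}. multi_indices d (s - a))"
proof (rule inj_onI, clarify)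
  fix a \<alpha> b \<gamma>
  assume "\<alpha> \<in> multi_indices d (s - a)" "\<gamma> \<in> multi_indices d (s - b)" and eq: "\<alpha>(d := a) = \<gamma>(d := b)"
  then have "\<alpha> d = 0" "\<gamma> d = 0" unfolding multi_indices_def by auto
  moreover have "\<alpha> = \<gamma>"
  proof
    fix j show "\<alpha> j = \<gamma> j" using fun_cong[OF eq, of j] \<open>\<alpha> d = 0\<close> \<open>\<gamma> d = 0\<close> by (cases "j = d") auto
  qed
  moreover from fun_cong[OF eq, of d] have "a = b" by simp
  ultimately show "a = b \<and> \<alpha> = \<gamma>" by simp
qed

lemma finite_multi_indices: "finite (multi_indices d s)"
  by (induction d arbitrary: s) (simp_all add: multi_indices_0 multi_indices_Suc)

lemma sum_multi_indices_Suc: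
  "(\<Sum>\<alpha>\<in>multi_indices (Suc d) s. f \<alpha>) = (\<Sum>a\<le>s. \<Sum>\<alpha>\<in>multi_indices d (s - a). f (\<alpha>(d := a)))"
  unfolding multi_indices_Suc
  by (subst sum.reindex[OF inj_on_multi_indices_Suc])
     (auto simp: sum.Sigma finite_multi_indices split_def)

lemma card_multi_indices: "card (multi_indices d s) = (s + d) choose d"
proof -
  have "card (multi_indices d s) = (d + s) choose s" for s
  proof (induction d arbitrary: s)
    case 0 then show ?case by (simp add: multi_indices_0)
  next
    case (Suc d)
    have "card (multi_indices (Suc d) s) = (\<Sum>a\<le>s. card (multi_indices d (s - a)))"
      unfolding multi_indices_Suc
      by (subst card_image[OF inj_on_multi_indices_Suc]) (simp add: card_SigmaI finite_multi_indices)
    also have "\<dots> = (\<Sum>a\<le>s. (d + (s - a)) choose (s - a))" using Suc by simp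
    also have "\<dots> = (\<Sum>k\<le>s. (d + k) choose k)"
      by (rule sum.reindex_bij_witness[where i="\<lambda>k. s - k" and j="\<lambda>k. s - k"]) auto
    also have "\<dots> = (Suc d + s) choose s" by (simp add: sum_choose_lower)
    finally show ?case .
  qed
  moreover have "(s + d) choose s = (s + d) choose d"
    using binomial_symmetric[of s "s + d"] by simp
  ultimately show ?thesis by (simp add: add.commute)
qed

lemma truncated_exp_add:
  fixes x y :: real
  shows "(\<Sum>a\<le>s. x^a / fact a * (\<Sum>q\<le>s - a. y^q / fact q)) = (\<Sum>p\<le>s. (x + y)^p / fact p)"
proof -
  have binomial: "(x + y)^p / fact p = (\<Sum>a\<le>p. x^a / fact a * (y^(p - a) / fact (p - a)))" for p
  proof -
    have "(x + y)^p / fact p = (\<Sum>a\<le>p. of_nat (p choose a) * x^a * y^(p - a) / fact p)"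
      by (simp add: binomial_ring sum_divide_distrib)
    also have "\<dots> = (\<Sum>a\<le>p. x^a / fact a * (y^(p - a) / fact (p - a)))"
      by (intro sum.cong refl) (simp add: binomial_fact field_simps)
    finally show ?thesis .
  qed
  have "(\<Sum>p\<le>s. (x + y)^p / fact p) = (\<Sum>p\<le>s. \<Sum>a\<le>p. x^a / fact a * (y^(p - a) / fact (p - a)))"
    by (simp only: binomial)
  also have "\<dots> = (\<Sum>(a, q)\<in>{(a, q). a + q \<le> s}. x^a / fact a * (y^q / fact q))"
    by (rule sum.triangle_reindex_eq[symmetric])
  also have "\<dots> = (\<Sum>a\<le>s. \<Sum>q\<le>s - a. x^a / fact a * (y^q / fact q))"
    by (auto simp: pairs_le_eq_Sigma sum.Sigma)
  finally show ?thesis by (simp add: sum_distrib_left)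
qed

lemma truncated_exp_multinomial:
  fixes y :: "nat \<Rightarrow> real"
  shows "(\<Sum>\<alpha>\<in>multi_indices d s. \<Prod>j<d. y j ^ \<alpha> j / fact (\<alpha> j)) = (\<Sum>p\<le>s. (\<Sum>j<d. y j)^p / fact p)"
proof (induction d arbitrary: s)
  case 0 then show ?case by (simp add: multi_indices_0, induction s, simp_all)
next
  case (Suc d)
  have "(\<Sum>\<alpha>\<in>multi_indices (Suc d) s. \<Prod>j<Suc d. y j ^ \<alpha> j / fact (\<alpha> j))
      = (\<Sum>a\<le>s. \<Sum>\<alpha>\<in>multi_indices d (s - a). y d ^ a / fact a * (\<Prod>j<d. y j ^ \<alpha> j / fact (\<alpha> j)))"
    unfolding sum_multi_indices_Suc by (intro sum.cong refl) (simp add: prod.lessThan_Suc mult.commute)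
  also have "\<dots> = (\<Sum>a\<le>s. y d ^ a / fact a * (\<Sum>q\<le>s - a. (\<Sum>j<d. y j)^q / fact q))"
    by (simp only: sum_distrib_left[symmetric] Suc.IH)
  also have "\<dots> = (\<Sum>p\<le>s. (y d + (\<Sum>j<d. y j))^p / fact p)" by (rule truncated_exp_add)
  finally show ?case by (simp add: add.commute)
qed

section \<open>Rank and entries of the Taylor kernel\<close>

lemma rank_sum_outer_products_le_card:
  fixes f :: "'b \<Rightarrow> nat \<Rightarrow> 'a :: field"
  assumes "finite S"
  shows "vec_space.rank n (mat n n (\<lambda>(i, l). \<Sum>\<alpha>\<in>S. f \<alpha> i * f \<alpha> l)) \<le> card S"
  using assms
proof (induction S rule: finite_induct)
  case empty
  have "mat n n (\<lambda>(i, l). \<Sum>\<alpha>\<in>{}. f \<alpha> i * f \<alpha> l) = 0\<^sub>m n n"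
    by (intro eq_matI) auto
  then show ?case by (metis vec_space.rank_0I card.empty order_refl)
next
  case (insert a S)
  have split: "mat n n (\<lambda>(i, l). \<Sum>\<alpha>\<in>insert a S. f \<alpha> i * f \<alpha> l) =
      mat n n (\<lambda>(i, l). f a i * f a l) + mat n n (\<lambda>(i, l). \<Sum>\<alpha>\<in>S. f \<alpha> i * f \<alpha> l)"
    using insert by (intro eq_matI) auto
  have "vec_space.rank n (mat n n (\<lambda>(i, l). f a i * f a l)) \<le> 1"
    by (rule vec_space.rank_le_1_product_entries[of _ n n "f a" "f a"]) auto
  moreover have "vec_space.rank n (mat n n (\<lambda>(i, l). \<Sum>\<alpha>\<in>insert a S. f \<alpha> i * f \<alpha> l)) \<le>
      vec_space.rank n (mat n n (\<lambda>(i, l). f a i * f a l))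
      + vec_space.rank n (mat n n (\<lambda>(i, l). \<Sum>\<alpha>\<in>S. f \<alpha> i * f \<alpha> l))"
    unfolding split by (rule vec_space.rank_subadditive) auto
  ultimately show ?case using insert by simp
qed

lemma rank_taylor_kernel_le:
  assumes "K \<in> carrier_mat n d"
  shows "mat_rank (taylor_kernel \<beta> s K) \<le> (s + d) choose d"
proof -
  let ?f = "\<lambda>\<alpha> i. phi \<beta> d \<alpha> (row K i)"
  have "mat_rank (taylor_kernel \<beta> s K)
      = vec_space.rank n (mat n n (\<lambda>(i, l). \<Sum>\<alpha>\<in>multi_indices d s. ?f \<alpha> i * ?f \<alpha> l))"
    using assms unfolding mat_rank_def taylor_kernel_def by simp
  also have "\<dots> \<le> card (multi_indices d s)"
    by (rule rank_sum_outer_products_le_card[OF finite_multi_indices])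
  finally show ?thesis by (simp add: card_multi_indices)
qed

lemma phi_mult_phi:
  assumes "\<beta> \<ge> 0"
  shows "phi \<beta> d \<alpha> k * phi \<beta> d \<alpha> k' = (\<Prod>j<d. (\<beta> * (k $ j * k' $ j)) ^ \<alpha> j / fact (\<alpha> j))"
proof -
  define C where "C = (\<Prod>j<d. \<beta> ^ \<alpha> j / fact (\<alpha> j))"
  have coeff: "1 / fact (mi_abs d \<alpha>) * multinom d \<alpha> * \<beta> ^ mi_abs d \<alpha> = C"
    unfolding multinom_def mi_abs_def C_def by (simp add: prod_dividef power_sum prod.distrib)
  have "0 \<le> C" unfolding C_def using assms by (intro prod_nonneg) auto
  have "phi \<beta> d \<alpha> k * phi \<beta> d \<alpha> k'
      = (sqrt C * sqrt C) * ((\<Prod>j<d. (k $ j) ^ \<alpha> j) * (\<Prod>j<d. (k' $ j) ^ \<alpha> j))"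
    unfolding phi_def coeff by (simp only: mult_ac)
  also have "sqrt C * sqrt C = C" using \<open>0 \<le> C\<close> by simp
  also have "C * ((\<Prod>j<d. (k $ j) ^ \<alpha> j) * (\<Prod>j<d. (k' $ j) ^ \<alpha> j))
      = (\<Prod>j<d. \<beta> ^ \<alpha> j / fact (\<alpha> j) * ((k $ j) ^ \<alpha> j * (k' $ j) ^ \<alpha> j))"
    unfolding C_def by (simp only: prod.distrib)
  also have "\<dots> = (\<Prod>j<d. (\<beta> * (k $ j * k' $ j)) ^ \<alpha> j / fact (\<alpha> j))"
    by (intro prod.cong refl) (simp add: power_mult_distrib)
  finally show ?thesis .
qed

lemma taylor_kernel_index:
  assumes K: "K \<in> carrier_mat n d" and "\<beta> \<ge> 0" and "i < n" "l < n"
  shows "taylor_kernel \<beta> s K $$ (i, l) = (\<Sum>p\<le>s. (\<beta> * (row K i \<bullet> row K l))^p / fact p)"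
proof -
  have "taylor_kernel \<beta> s K $$ (i, l)
      = (\<Sum>\<alpha>\<in>multi_indices d s. \<Prod>j<d. (\<beta> * (row K i $ j * row K l $ j)) ^ \<alpha> j / fact (\<alpha> j))"
    using assms unfolding taylor_kernel_def by (simp add: phi_mult_phi)
  also have "\<dots> = (\<Sum>p\<le>s. (\<Sum>j<d. \<beta> * (row K i $ j * row K l $ j))^p / fact p)"
    by (rule truncated_exp_multinomial)
  also have "(\<Sum>j<d. \<beta> * (row K i $ j * row K l $ j)) = \<beta> * (row K i \<bullet> row K l)"
    using K unfolding scalar_prod_def by (simp add: sum_distrib_left atLeast0LessThan)
  finally show ?thesis .
qed

lemma exp_kernel_minus_taylor_kernel_index:
  assumes "K \<in> carrier_mat n d" and "\<beta> \<ge> 0" and "i < n" "l < n"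
  shows "(exp_kernel \<beta> K - taylor_kernel \<beta> s K) $$ (i, l)
    = exp (\<beta> * (row K i \<bullet> row K l)) - (\<Sum>p\<le>s. (\<beta> * (row K i \<bullet> row K l))^p / fact p)"
  using assms taylor_kernel_index[OF assms]
  by (simp add: exp_kernel_def taylor_kernel_def)

lemma exp_kernel_minus_taylor_kernel_symmetric:
  assumes K: "K \<in> carrier_mat n d" and \<beta>: "\<beta> \<ge> 0" and il: "i < n" "l < n"
  shows "(exp_kernel \<beta> K - taylor_kernel \<beta> s K) $$ (i, l) = (exp_kernel \<beta> K - taylor_kernel \<beta> s K) $$ (l, i)"
proof -
  have "row K i \<bullet> row K l = row K l \<bullet> row K i"
    using K il by (intro comm_scalar_prod[of _ d]) auto
  then show ?thesis
    by (simp add: exp_kernel_minus_taylor_kernel_index[OF K \<beta> il]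
                  exp_kernel_minus_taylor_kernel_index[OF K \<beta> il(2) il(1)])
qed

section \<open>Positivity of the remainder kernel\<close>

text \<open>Schur's product theorem for the Hadamard powers of a Gram matrix: peeling off one factor
  of the power splits the form into a sum of forms of the same shape.\<close>

lemma gram_power_quadratic_form_nonneg:
  fixes u :: "'i \<Rightarrow> real" and a :: "'i \<Rightarrow> 'j \<Rightarrow> real"
  shows "0 \<le> (\<Sum>i\<in>I. \<Sum>l\<in>I. u i * u l * (\<Sum>j\<in>J. a i j * a l j)^q)"
proof (induction q arbitrary: u)
  case 0
  have "(\<Sum>i\<in>I. \<Sum>l\<in>I. u i * u l * (\<Sum>j\<in>J. a i j * a l j)^0) = (\<Sum>i\<in>I. u i)^2"
    by (simp add: power2_eq_square sum_product)
  then show ?case by simp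
next
  case (Suc q)
  define G where "G i l = (\<Sum>j\<in>J. a i j * a l j)" for i l
  have split: "u i * u l * G i l ^ Suc q = (\<Sum>j\<in>J. (u i * a i j) * (u l * a l j) * G i l ^ q)"
    for i l
  proof -
    have "u i * u l * G i l ^ Suc q = (\<Sum>j\<in>J. a i j * a l j) * (u i * u l * G i l ^ q)"
      unfolding power_Suc by (simp only: G_def[symmetric] mult_ac)
    also have "\<dots> = (\<Sum>j\<in>J. (u i * a i j) * (u l * a l j) * G i l ^ q)"
      unfolding sum_distrib_right by (intro sum.cong refl) (simp only: mult_ac)
    finally show ?thesis .
  qed
  have "(\<Sum>i\<in>I. \<Sum>l\<in>I. u i * u l * G i l ^ Suc q)
      = (\<Sum>i\<in>I. \<Sum>l\<in>I. \<Sum>j\<in>J. (u i * a i j) * (u l * a l j) * G i l ^ q)"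
    by (simp only: split)
  also have "\<dots> = (\<Sum>i\<in>I. \<Sum>j\<in>J. \<Sum>l\<in>I. (u i * a i j) * (u l * a l j) * G i l ^ q)"
    by (rule sum.cong[OF refl], rule sum.swap)
  also have "\<dots> = (\<Sum>j\<in>J. \<Sum>i\<in>I. \<Sum>l\<in>I. (u i * a i j) * (u l * a l j) * G i l ^ q)"
    by (rule sum.swap)
  also have "\<dots> \<ge> 0"
    unfolding G_def by (intro sum_nonneg Suc.IH)
  finally show ?case unfolding G_def .
qed

lemma exp_remainder_sums:
  fixes x :: real
  shows "(\<lambda>m. x^(m + Suc s) / fact (m + Suc s)) sums (exp x - (\<Sum>p\<le>s. x^p / fact p))"
proof -
  have "(\<lambda>p. x^p / fact p) sums exp x"
    using exp_converges[of x] by (simp add: divide_inverse mult.commute)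
  from sums_split_initial_segment[OF this, of "Suc s"] show ?thesis
    by (simp add: lessThan_Suc_atMost)
qed

lemma scalar_prod_mult_mat_vec_self:
  fixes A :: "'a :: comm_semiring_0 mat"
  assumes "A \<in> carrier_mat n n" "x \<in> carrier_vec n"
  shows "x \<bullet> (A *\<^sub>v x) = (\<Sum>i<n. \<Sum>l<n. x $ i * x $ l * A $$ (i, l))"
  using assms unfolding scalar_prod_def
  by (simp add: mult_mat_vec_def scalar_prod_def sum_distrib_left atLeast0LessThan algebra_simps)

text \<open>Entrywise, H - T^s is the series over p > s of the Hadamard powers of the Gram matrix
  of the rows of K, weighted by beta^p / p!.\<close>

lemma exp_kernel_minus_taylor_kernel_psd:
  assumes K: "K \<in> carrier_mat n d" and \<beta>: "\<beta> \<ge> 0" and x: "x \<in> carrier_vec n"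
  shows "0 \<le> x \<bullet> ((exp_kernel \<beta> K - taylor_kernel \<beta> s K) *\<^sub>v x)"
proof -
  let ?A = "exp_kernel \<beta> K - taylor_kernel \<beta> s K"
  let ?g = "\<lambda>i l. row K i \<bullet> row K l"
  define c where "c m = \<beta>^(m + Suc s) / fact (m + Suc s)" for m
  have A: "?A \<in> carrier_mat n n" using K unfolding exp_kernel_def taylor_kernel_def by auto
  have g: "?g i l = (\<Sum>j<d. K $$ (i, j) * K $$ (l, j))" if "i < n" "l < n" for i l
    using K that unfolding scalar_prod_def by (simp add: atLeast0LessThan)
  have series: "(\<lambda>m. \<Sum>i<n. \<Sum>l<n. x $ i * x $ l * ((\<beta> * ?g i l)^(m + Suc s) / fact (m + Suc s)))
      sums (\<Sum>i<n. \<Sum>l<n. x $ i * x $ l * ?A $$ (i, l))"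
    using exp_remainder_sums
    by (intro sums_sum sums_mult) (simp add: exp_kernel_minus_taylor_kernel_index[OF K \<beta>])
  have "(\<Sum>i<n. \<Sum>l<n. x $ i * x $ l * ((\<beta> * ?g i l)^(m + Suc s) / fact (m + Suc s)))
      = c m * (\<Sum>i<n. \<Sum>l<n. x $ i * x $ l * (\<Sum>j<d. K $$ (i, j) * K $$ (l, j))^(m + Suc s))" for m
    unfolding c_def sum_distrib_left
    by (intro sum.cong refl) (simp add: g power_mult_distrib)
  moreover have "0 \<le> c m * (\<Sum>i<n. \<Sum>l<n. x $ i * x $ l * (\<Sum>j<d. K $$ (i, j) * K $$ (l, j))^(m + Suc s))"
    for m
    unfolding c_def using \<beta> by (intro mult_nonneg_nonneg gram_power_quadratic_form_nonneg) auto
  ultimately have "0 \<le> (\<Sum>i<n. \<Sum>l<n. x $ i * x $ l * ((\<beta> * ?g i l)^(m + Suc s) / fact (m + Suc s)))"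
    for m by simp
  then have "0 \<le> (\<Sum>i<n. \<Sum>l<n. x $ i * x $ l * ?A $$ (i, l))"
    by (rule sums_le[OF _ sums_zero series])
  then show ?thesis using scalar_prod_mult_mat_vec_self[OF A x] by simp
qed

section \<open>The nuclear norm of a positive semidefinite matrix\<close>

definition mat_trace :: "'a :: comm_monoid_add mat \<Rightarrow> 'a" where
  "mat_trace A = (\<Sum>i<dim_row A. A $$ (i, i))"

lemma mat_trace_mult_comm:
  fixes X Y :: "'a :: comm_semiring_0 mat"
  assumes "X \<in> carrier_mat n n" "Y \<in> carrier_mat n n"
  shows "mat_trace (X * Y) = mat_trace (Y * X)"
proof -
  have "mat_trace (X * Y) = (\<Sum>i<n. \<Sum>k<n. X $$ (i, k) * Y $$ (k, i))"
    using assms unfolding mat_trace_def by (simp add: scalar_prod_def atLeast0LessThan)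
  also have "\<dots> = (\<Sum>k<n. \<Sum>i<n. Y $$ (k, i) * X $$ (i, k))"
    by (subst sum.swap) (simp add: mult.commute)
  also have "\<dots> = mat_trace (Y * X)"
    using assms unfolding mat_trace_def by (simp add: scalar_prod_def atLeast0LessThan)
  finally show ?thesis .
qed

lemma mat_trace_similar:
  fixes A B :: "'a :: comm_semiring_1 mat"
  assumes A: "A \<in> carrier_mat n n" and sim: "similar_mat_wit A B P Q"
  shows "mat_trace A = mat_trace B"
proof -
  from similar_mat_witD2[OF A sim] have QP: "Q * P = 1\<^sub>m n" and AB: "A = P * B * Q"
    and B: "B \<in> carrier_mat n n" and P: "P \<in> carrier_mat n n" and Q: "Q \<in> carrier_mat n n"
    by auto
  have "mat_trace A = mat_trace (P * (B * Q))" unfolding AB using P B Q by (simp add: assoc_mult_mat)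
  also have "\<dots> = mat_trace (B * Q * P)"
    using P B Q by (simp add: mat_trace_mult_comm[of P n "B * Q"])
  also have "\<dots> = mat_trace B" using P B Q QP by (simp add: assoc_mult_mat[of B n n Q n P n])
  finally show ?thesis .
qed

text \<open>For an eigenvector v of the complexified matrix, the Hermitian form v^* A v equals both
  its own conjugate and the eigenvalue times |v|^2.\<close>

lemma symmetric_real_eigenvalue_real:
  fixes A :: "real mat"
  assumes A: "A \<in> carrier_mat n n" and sym: "\<And>i l. i < n \<Longrightarrow> l < n \<Longrightarrow> A $$ (i, l) = A $$ (l, i)"
    and ev: "eigenvector (map_mat complex_of_real A) v a"
  shows "Im a = 0"
proof -
  let ?Ac = "map_mat complex_of_real A"
  have v: "v \<in> carrier_vec n" and v0: "v \<noteq> 0\<^sub>v n" and e: "?Ac *\<^sub>v v = a \<cdot>\<^sub>v v"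
    using ev A unfolding eigenvector_def by auto
  have row_eq: "(\<Sum>l<n. of_real (A $$ (i, l)) * v $ l) = a * v $ i" if "i < n" for i
  proof -
    have "(?Ac *\<^sub>v v) $ i = (a \<cdot>\<^sub>v v) $ i" using e by simp
    then show ?thesis using that A v unfolding mult_mat_vec_def scalar_prod_def
      by (simp add: atLeast0LessThan)
  qed
  define S where "S = (\<Sum>i<n. \<Sum>l<n. cnj (v $ i) * of_real (A $$ (i, l)) * v $ l)"
  define N where "N = (\<Sum>i<n. (cmod (v $ i))^2)"
  have "S = (\<Sum>i<n. cnj (v $ i) * (\<Sum>l<n. of_real (A $$ (i, l)) * v $ l))"
    unfolding S_def by (simp add: sum_distrib_left mult.assoc)
  also have "\<dots> = (\<Sum>i<n. a * (v $ i * cnj (v $ i)))"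
    by (intro sum.cong refl) (simp add: row_eq)
  also have "\<dots> = a * of_real N"
    unfolding N_def of_real_sum sum_distrib_left by (simp only: complex_norm_square)
  finally have S_eq: "S = a * of_real N" .
  have "cnj S = (\<Sum>i<n. \<Sum>l<n. v $ i * of_real (A $$ (i, l)) * cnj (v $ l))"
    unfolding S_def by (simp add: cnj_sum)
  also have "\<dots> = (\<Sum>l<n. \<Sum>i<n. v $ i * of_real (A $$ (i, l)) * cnj (v $ l))"
    by (rule sum.swap)
  also have "\<dots> = S" unfolding S_def
    by (intro sum.cong refl) (simp add: sym mult.commute mult.left_commute)
  finally have S_real: "cnj S = S" .
  from v0 v obtain i where i: "i < n" "v $ i \<noteq> 0" by (auto simp: vec_eq_iff)
  have "0 < (cmod (v $ i))^2" using i by simp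
  also have "\<dots> \<le> N" unfolding N_def
    by (rule member_le_sum[where f = "\<lambda>i. (cmod (v $ i))^2"]) (use i in auto)
  finally have "N \<noteq> 0" by simp
  from S_eq S_real have "cnj a * of_real N = a * of_real N"
    by (metis complex_cnj_complex_of_real complex_cnj_mult)
  with \<open>N \<noteq> 0\<close> have "cnj a = a" by simp
  then show ?thesis by (metis Reals_cnj_iff complex_is_Real_iff)
qed

interpretation of_real_poly_hom: map_poly_inj_comm_ring_hom complex_of_real ..

lemma char_poly_symmetric_real_splits:
  fixes A :: "real mat"
  assumes A: "A \<in> carrier_mat n n" and sym: "\<And>i l. i < n \<Longrightarrow> l < n \<Longrightarrow> A $$ (i, l) = A $$ (l, i)"
  obtains es where "char_poly A = (\<Prod>e\<leftarrow>es. [:- e, 1:])"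
proof -
  let ?Ac = "map_mat complex_of_real A"
  have Ac: "?Ac \<in> carrier_mat n n" using A by simp
  obtain as where cp: "char_poly ?Ac = (\<Prod>a\<leftarrow>as. [:- a, 1:])"
    using char_poly_factorized[OF Ac] by auto
  have "Im a = 0" if "a \<in> set as" for a
  proof -
    have "poly (char_poly ?Ac) a = 0" unfolding cp using that by (rule linear_poly_root)
    then obtain v where "eigenvector ?Ac v a"
      using eigenvalue_root_char_poly[OF Ac] unfolding eigenvalue_def by auto
    then show ?thesis using symmetric_real_eigenvalue_real[OF A sym] by blast
  qed
  then have as: "as = map (complex_of_real \<circ> Re) as"
    by (induction as) (auto simp: complex_eq_iff)
  have "map_poly complex_of_real (char_poly A) = char_poly ?Ac"
    by (rule of_real_hom.char_poly_hom[OF A, symmetric])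
  also have "\<dots> = map_poly complex_of_real (\<Prod>e\<leftarrow>map Re as. [:- e, 1:])"
    unfolding cp by (subst as) (simp add: of_real_poly_hom.hom_prod_list o_def)
  finally have "char_poly A = (\<Prod>e\<leftarrow>map Re as. [:- e, 1:])" by simp
  then show ?thesis by (rule that)
qed

lemma psd_eigenvalue_nonneg:
  fixes A :: "real mat"
  assumes A: "A \<in> carrier_mat n n" and psd: "\<And>x. x \<in> carrier_vec n \<Longrightarrow> 0 \<le> x \<bullet> (A *\<^sub>v x)"
    and "eigenvalue A e"
  shows "e \<ge> 0"
proof -
  obtain v where "eigenvector A v e" using assms unfolding eigenvalue_def by auto
  then have v: "v \<in> carrier_vec n" and v0: "v \<noteq> 0\<^sub>v n" and Av: "A *\<^sub>v v = e \<cdot>\<^sub>v v"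
    using A unfolding eigenvector_def by auto
  have "0 \<le> v \<bullet> (A *\<^sub>v v)" using psd v by simp
  also have "\<dots> = e * (v \<bullet> v)" unfolding Av using v by simp
  finally have "0 \<le> e * (v \<bullet> v)" .
  moreover have "0 < v \<bullet> v" using conjugate_square_greater_0_vec[OF v] v0 by simp
  ultimately show ?thesis by (simp add: zero_le_mult_iff)
qed

lemma upper_triangular_mult_self:
  fixes B :: "'a :: comm_semiring_0 mat"
  assumes B: "B \<in> carrier_mat n n" and ut: "upper_triangular B"
  shows "upper_triangular (B * B)" "diag_mat (B * B) = map (\<lambda>i. B $$ (i, i) * B $$ (i, i)) [0..<n]"
proof -
  have low: "B $$ (i, j) = 0" if "j < i" "i < n" for i j using ut B that by auto
  show "upper_triangular (B * B)"
  proof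
    fix i j assume i: "i < dim_row (B * B)" and j: "j < i"
    have "(B * B) $$ (i, j) = (\<Sum>k<n. B $$ (i, k) * B $$ (k, j))"
      using i j B by (simp add: scalar_prod_def atLeast0LessThan)
    also have "\<dots> = 0"
    proof (intro sum.neutral ballI)
      fix k assume "k \<in> {..<n}"
      then show "B $$ (i, k) * B $$ (k, j) = 0" using low[of k i] low[of j k] i j B
        by (cases "k < i") auto
    qed
    finally show "(B * B) $$ (i, j) = 0" .
  qed
  have "(B * B) $$ (i, i) = B $$ (i, i) * B $$ (i, i)" if i: "i < n" for i
  proof -
    have "(B * B) $$ (i, i) = (\<Sum>k<n. B $$ (i, k) * B $$ (k, i))"
      using i B by (simp add: scalar_prod_def atLeast0LessThan)
    also have "\<dots> = B $$ (i, i) * B $$ (i, i) + (\<Sum>k\<in>{..<n} - {i}. B $$ (i, k) * B $$ (k, i))"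
      by (rule sum.remove) (use i in auto)
    also have "(\<Sum>k\<in>{..<n} - {i}. B $$ (i, k) * B $$ (k, i)) = 0"
    proof (intro sum.neutral ballI)
      fix k assume "k \<in> {..<n} - {i}"
      then show "B $$ (i, k) * B $$ (k, i) = 0" using low[of k i] low[of i k] i
        by (cases "k < i") auto
    qed
    finally show ?thesis by simp
  qed
  then show "diag_mat (B * B) = map (\<lambda>i. B $$ (i, i) * B $$ (i, i)) [0..<n]"
    using B unfolding diag_mat_def by auto
qed

lemma order_prod_linear_factors:
  fixes bs :: "'a :: idom list"
  shows "Polynomial.order a (\<Prod>b\<leftarrow>bs. [:- b, 1:]) = count_list bs a"
proof (induction bs)
  case Nil then show ?case by (simp add: order_1)
next
  case (Cons b bs)
  have "(\<Prod>b\<leftarrow>bs. [:- b, 1:]) \<noteq> 0" by (auto simp: prod_list_zero_iff)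
  then have "[:- b, 1:] * (\<Prod>b\<leftarrow>bs. [:- b, 1:]) \<noteq> 0" by (intro no_zero_divisors) simp_all
  then have "Polynomial.order a ([:- b, 1:] * (\<Prod>b\<leftarrow>bs. [:- b, 1:]))
      = Polynomial.order a [:- b, 1:] + Polynomial.order a (\<Prod>b\<leftarrow>bs. [:- b, 1:])"
    by (rule order_mult)
  then show ?case using Cons by (simp add: order_linear')
qed

lemma sum_list_map_eq_sum_count_list:
  fixes f :: "'a \<Rightarrow> 'b :: comm_semiring_1"
  shows "sum_list (map f xs) = (\<Sum>x\<in>set xs. of_nat (count_list xs x) * f x)"
proof (induction xs)
  case Nil then show ?case by simp
next
  case (Cons y xs)
  have "(\<Sum>x\<in>set (y # xs). of_nat (count_list (y # xs) x) * f x)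
      = (\<Sum>x\<in>insert y (set xs). (if y = x then f x else 0) + of_nat (count_list xs x) * f x)"
    by (intro sum.cong) (auto simp: distrib_right)
  also have "\<dots> = f y + (\<Sum>x\<in>set xs. of_nat (count_list xs x) * f x)"
    by (simp add: sum.distrib sum.delta count_list_0_iff sum.insert_if)
  finally show ?case using Cons by simp
qed

lemma sum_roots_prod_linear_factors:
  fixes bs :: "real list"
  shows "(\<Sum>a\<in>{a. poly (\<Prod>b\<leftarrow>bs. [:- b, 1:]) a = 0}. real (Polynomial.order a (\<Prod>b\<leftarrow>bs. [:- b, 1:])) * f a)
     = sum_list (map f bs)"
proof -
  have "{a. poly (\<Prod>b\<leftarrow>bs. [:- b, 1:]) a = 0} = set bs"
    by (auto simp: poly_prod_list_zero_iff)
  then show ?thesis by (simp add: order_prod_linear_factors sum_list_map_eq_sum_count_list)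
qed

text \<open>Schur-triangularize A = P B P^-1; then A^T A = A A is similar to B B, which is triangular
  with diagonal entries B_ii^2, and B_ii >= 0 are the eigenvalues of A.\<close>

lemma nuclear_norm_psd:
  fixes A :: "real mat"
  assumes A: "A \<in> carrier_mat n n" and sym: "\<And>i l. i < n \<Longrightarrow> l < n \<Longrightarrow> A $$ (i, l) = A $$ (l, i)"
    and psd: "\<And>x. x \<in> carrier_vec n \<Longrightarrow> 0 \<le> x \<bullet> (A *\<^sub>v x)"
  shows "nuclear_norm A = mat_trace A"
proof -
  obtain es where cp: "char_poly A = (\<Prod>e\<leftarrow>es. [:- e, 1:])"
    using char_poly_symmetric_real_splits[OF A sym] .
  obtain B P Q where "schur_decomposition A es = (B, P, Q)" by (cases "schur_decomposition A es")
  with schur_decomposition[OF A cp] have sim: "similar_mat_wit A B P Q"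
    and ut: "upper_triangular B" and diag: "diag_mat B = es" by auto
  have B: "B \<in> carrier_mat n n" using similar_mat_witD2[OF A sim] by auto
  have B_diag_nonneg: "B $$ (i, i) \<ge> 0" if "i < n" for i
  proof -
    have "B $$ (i, i) \<in> set es" using diag[symmetric] that B unfolding diag_mat_def by auto
    then have "poly (char_poly A) (B $$ (i, i)) = 0" unfolding cp by (rule linear_poly_root)
    then show ?thesis using psd_eigenvalue_nonneg[OF A psd] eigenvalue_root_char_poly[OF A] by simp
  qed
  define bs where "bs = map (\<lambda>i. B $$ (i, i) * B $$ (i, i)) [0..<n]"
  have "similar_mat_wit (A ^\<^sub>m 2) (B ^\<^sub>m 2) P Q" by (rule similar_mat_wit_pow[OF sim])
  moreover have "A ^\<^sub>m 2 = A * A" "B ^\<^sub>m 2 = B * B" using A B by (simp_all add: numeral_2_eq_2)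
  ultimately have "char_poly (A * A) = char_poly (B * B)"
    by (intro char_poly_similar) (auto simp: similar_mat_def)
  also have "\<dots> = (\<Prod>b\<leftarrow>bs. [:- b, 1:])"
    using char_poly_upper_triangular[of "B * B" n] upper_triangular_mult_self[OF B ut] B
    unfolding bs_def by simp
  finally have cp_sq: "char_poly (A * A) = (\<Prod>b\<leftarrow>bs. [:- b, 1:])" .
  have "transpose_mat A = A" using A sym by (intro eq_matI) auto
  moreover have "{a. eigenvalue (A * A) a} = {a. poly (\<Prod>b\<leftarrow>bs. [:- b, 1:]) a = 0}"
    using eigenvalue_root_char_poly[of "A * A" n] A cp_sq by auto
  ultimately have "nuclear_norm A = (\<Sum>a\<in>{a. poly (\<Prod>b\<leftarrow>bs. [:- b, 1:]) a = 0}.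
      real (Polynomial.order a (\<Prod>b\<leftarrow>bs. [:- b, 1:])) * sqrt a)"
    unfolding nuclear_norm_def Let_def by (simp add: cp_sq)
  also have "\<dots> = sum_list (map sqrt bs)" by (rule sum_roots_prod_linear_factors)
  also have "\<dots> = (\<Sum>i<n. B $$ (i, i))"
    unfolding bs_def using B_diag_nonneg by (simp add: sum_list_sum_nth atLeast0LessThan)
  also have "\<dots> = mat_trace B" unfolding mat_trace_def using B by simp
  also have "\<dots> = mat_trace A" using mat_trace_similar[OF A sim] by simp
  finally show ?thesis .
qed

section \<open>Estimate of the remainder\<close>

lemma power_self_div_fact_le_exp: "real m ^ m / fact m \<le> exp (real m)"
proof -
  have "real m ^ m / fact m \<le> (\<Sum>k<Suc m. real m ^ k / fact k)"
    by (rule member_le_sum[where f = "\<lambda>k. real m ^ k / fact k"]) auto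
  also have "\<dots> \<le> exp (real m)"
    using Maclaurin_exp_le[of "real m" "Suc m"] by (auto intro: add_increasing2)
  finally show ?thesis .
qed

lemma exp_remainder_le:
  fixes x X :: real
  assumes "0 \<le> x" "x \<le> X"
  shows "exp x - (\<Sum>p\<le>s. x^p / fact p) \<le> exp X * (exp 1 * X / real (s + 1)) ^ (s + 1)"
proof -
  let ?m = "Suc s"
  obtain t where t: "\<bar>t\<bar> \<le> \<bar>x\<bar>"
    and lagrange: "exp x = (\<Sum>p<?m. x^p / fact p) + exp t / fact ?m * x ^ ?m"
    using Maclaurin_exp_le[of x ?m] by auto
  have "exp x - (\<Sum>p\<le>s. x^p / fact p) = exp t / fact ?m * x ^ ?m"
    using lagrange by (simp add: lessThan_Suc_atMost)
  also have "\<dots> \<le> exp X / fact ?m * X ^ ?m"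
    using t assms by (intro mult_mono divide_right_mono power_mono) auto
  also have "\<dots> = exp X * (X ^ ?m / real ?m ^ ?m) * (real ?m ^ ?m / fact ?m)"
    by simp
  also have "\<dots> \<le> exp X * (X ^ ?m / real ?m ^ ?m) * exp (real ?m)"
    using assms by (intro mult_left_mono power_self_div_fact_le_exp) auto
  also have "exp (real ?m) = exp 1 ^ ?m"
    by (metis exp_of_nat_mult mult.right_neutral)
  also have "exp X * (X ^ ?m / real ?m ^ ?m) * exp 1 ^ ?m = exp X * (exp 1 * X / real (s + 1)) ^ (s + 1)"
    by (simp add: power_divide power_mult_distrib)
  finally show ?thesis .
qed

lemma row_scalar_prod_self_le_norm_2_inf:
  assumes K: "K \<in> carrier_mat n d" and i: "i < n"
  shows "row K i \<bullet> row K i \<le> (norm_2_inf K)^2"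
proof -
  let ?sq = "\<Sum>j<dim_col K. (K $$ (i, j))^2"
  have "0 \<le> ?sq" by (rule sum_nonneg) simp
  moreover have "sqrt ?sq \<le> norm_2_inf K"
    unfolding norm_2_inf_def using K i by (intro Max_ge) auto
  ultimately have "?sq \<le> (norm_2_inf K)^2"
    by (metis real_sqrt_le_iff real_sqrt_pow2 real_sqrt_unique sqrt_le_D)
  moreover have "row K i \<bullet> row K i = ?sq"
    using K i by (simp add: scalar_prod_def atLeast0LessThan power2_eq_square)
  ultimately show ?thesis by simp
qed

lemma mat_trace_exp_kernel_minus_taylor_kernel_le:
  assumes K: "K \<in> carrier_mat n d" and \<beta>: "\<beta> \<ge> 0"
  shows "mat_trace (exp_kernel \<beta> K - taylor_kernel \<beta> s K)
    \<le> real n * exp (\<beta> * (norm_2_inf K)^2) * (exp 1 * \<beta> * (norm_2_inf K)^2 / real (s + 1)) ^ (s + 1)"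
proof -
  let ?A = "exp_kernel \<beta> K - taylor_kernel \<beta> s K"
  let ?X = "\<beta> * (norm_2_inf K)^2"
  let ?bound = "exp ?X * (exp 1 * ?X / real (s + 1)) ^ (s + 1)"
  have diag: "?A $$ (i, i) \<le> ?bound" if i: "i < n" for i
  proof -
    have "0 \<le> row K i \<bullet> row K i" using K i by (simp add: scalar_prod_def sum_nonneg)
    moreover have "\<beta> * (row K i \<bullet> row K i) \<le> ?X"
      using row_scalar_prod_self_le_norm_2_inf[OF K i] \<beta> by (rule mult_left_mono)
    ultimately show ?thesis
      unfolding exp_kernel_minus_taylor_kernel_index[OF K \<beta> i i] using \<beta>
      by (intro exp_remainder_le) auto
  qed
  have "mat_trace ?A = (\<Sum>i<n. ?A $$ (i, i))"
    unfolding mat_trace_def using K by (simp add: taylor_kernel_def)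
  also have "\<dots> \<le> real (card {..<n}) * ?bound"
    by (rule sum_bounded_above) (use diag in auto)
  finally show ?thesis by (simp add: mult.assoc)
qed

theorem lemmaE2:
  fixes K :: "real mat" and n d s :: nat and \<beta> :: real
  assumes "K \<in> carrier_mat n d" and "\<beta> > 0"
  shows "mat_rank (taylor_kernel \<beta> s K) \<le> (s + d) choose d
       \<and> loewner_le (taylor_kernel \<beta> s K) (exp_kernel \<beta> K)
       \<and> nuclear_norm (exp_kernel \<beta> K - taylor_kernel \<beta> s K)
         \<le> real n * exp (\<beta> * (norm_2_inf K)^2)
             * (exp 1 * \<beta> * (norm_2_inf K)^2 / real (s + 1)) ^ (s + 1)"
proof -
  let ?H = "exp_kernel \<beta> K" and ?T = "taylor_kernel \<beta> s K"
  have \<beta>: "\<beta> \<ge> 0" using assms(2) by simp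
  have H: "?H \<in> carrier_mat n n" and T: "?T \<in> carrier_mat n n"
    using assms(1) unfolding exp_kernel_def taylor_kernel_def by auto
  have psd: "\<forall>x\<in>carrier_vec n. 0 \<le> x \<bullet> ((?H - ?T) *\<^sub>v x)"
    using exp_kernel_minus_taylor_kernel_psd[OF assms(1) \<beta>] by blast
  have "nuclear_norm (?H - ?T) = mat_trace (?H - ?T)"
  proof (rule nuclear_norm_psd)
    show "?H - ?T \<in> carrier_mat n n" by (rule minus_carrier_mat[OF T])
  qed (use psd exp_kernel_minus_taylor_kernel_symmetric[OF assms(1) \<beta>] in auto)
  also have "\<dots> \<le> real n * exp (\<beta> * (norm_2_inf K)^2)
      * (exp 1 * \<beta> * (norm_2_inf K)^2 / real (s + 1)) ^ (s + 1)"
    by (rule mat_trace_exp_kernel_minus_taylor_kernel_le[OF assms(1) \<beta>])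
  finally show ?thesis
    using rank_taylor_kernel_le[OF assms(1)] H T psd unfolding loewner_le_def by blast
qed

end
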